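(* Let $\rho>0$, $\alpha>0$, $\beta>0$, let $P=(p_1,\dots,p_n)$ be a path and $Q=(q_1,\dots,q_m)$ a walk in $G$, and let $\pi:[n']\to[n]$ be the index map of the $\beta$-compression of $P$, with the conventions $\pi(0)=0$ and $\pi(n'+1)=n+1$. For every $i\in[n']$ and $j\in[m]$, if $M^\beta_\rho[\pi(i),j]=-1$, then $M^\beta_\rho[x,j]\neq 1$ (i.e. $M^\beta_\rho[x,j]\le 0$) for all integers $x$ with $\pi(i-1)<x<\pi(i+1)$.
   Context: $G$ is a planar graph with positive integer edge weights and shortest-path distance $d$. $\tilde d$ is any function ("perceived distance", e.g. given by a $(1+\alpha)$-stretch distance oracle) with $d(u,v)\le\tilde d(u,v)\le(1+\alpha)d(u,v)$ for all vertices $u,v$. The approximate free-space matrix $M^\beta_\rho$ is the $n\times m$ matrix with $M^\beta_\rho[i,j]=-1$ if $\tilde d(p_i,q_j)\le(1+\alpha)\rho$, $M^\beta_\rho[i,j]=1$ if $\tilde d(p_i,q_j)>(1+\alpha)(1+\alpha+\beta)\rho$, and $0$ otherwise. The length of $P[p_s,p_t]$ ($s\le t$) is the total weight of the edges of $P$ between positions $s$ and $t$. $\beta$-compression: let $S=\{1\}$ and anchor $c=1$; scanning $x=c+1,c+2,\dots$, the first $x$ with length of $P[p_c,p_x]\ge\beta\rho$ is added to $S$ and becomes the new anchor, and scanning continues; then for each $s\in S$ with $s>1$ also add $s-1$; finally add $n$. Let $n'$ be the size of the resulting index set and $\pi:[n']\to[n]$ its increasing enumeration; $P^\beta=(p_{\pi(1)},\dots,p_{\pi(n')})$.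 *)

theory Defs
  imports Complex_Main
begin

definition weighted_graph :: "'v set \<Rightarrow> ('v \<times> 'v) set \<Rightarrow> ('v \<Rightarrow> 'v \<Rightarrow> nat) \<Rightarrow> bool" where
  "weighted_graph V E w \<longleftrightarrow> finite V \<and> E \<subseteq> V \<times> V
     \<and> (\<forall>u v. (u, v) \<in> E \<longrightarrow> (v, u) \<in> E) \<and> (\<forall>u. (u, u) \<notin> E)
     \<and> (\<forall>u v. (u, v) \<in> E \<longrightarrow> w u v = w v u \<and> w u v > 0)"

definition is_walk :: "'v set \<Rightarrow> ('v \<times> 'v) set \<Rightarrow> 'v list \<Rightarrow> bool" where
  "is_walk V E xs \<longleftrightarrow> xs \<noteq> [] \<and> set xs \<subseteq> V
     \<and> (\<forall>k. Suc k < length xs \<longrightarrow> (xs ! k, xs ! Suc k) \<in> E)"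

definition walk_weight :: "('v \<Rightarrow> 'v \<Rightarrow> nat) \<Rightarrow> 'v list \<Rightarrow> nat" where
  "walk_weight w xs = (\<Sum>k<length xs - 1. w (xs ! k) (xs ! Suc k))"

definition connected_graph :: "'v set \<Rightarrow> ('v \<times> 'v) set \<Rightarrow> bool" where
  "connected_graph V E \<longleftrightarrow>
     (\<forall>u\<in>V. \<forall>v\<in>V. \<exists>xs. is_walk V E xs \<and> hd xs = u \<and> last xs = v)"

definition sp_dist :: "'v set \<Rightarrow> ('v \<times> 'v) set \<Rightarrow> ('v \<Rightarrow> 'v \<Rightarrow> nat) \<Rightarrow> 'v \<Rightarrow> 'v \<Rightarrow> real" where
  "sp_dist V E w u v = Inf {real (walk_weight w xs) | xs. is_walk V E xs \<and> hd xs = u \<and> last xs = v}"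

definition is_walk_seq :: "'v set \<Rightarrow> ('v \<times> 'v) set \<Rightarrow> (nat \<Rightarrow> 'v) \<Rightarrow> nat \<Rightarrow> bool" where
  "is_walk_seq V E p n \<longleftrightarrow> (\<forall>i\<in>{1..n}. p i \<in> V) \<and> (\<forall>i. 1 \<le> i \<and> i < n \<longrightarrow> (p i, p (Suc i)) \<in> E)"

definition is_path_seq :: "'v set \<Rightarrow> ('v \<times> 'v) set \<Rightarrow> (nat \<Rightarrow> 'v) \<Rightarrow> nat \<Rightarrow> bool" where
  "is_path_seq V E p n \<longleftrightarrow> is_walk_seq V E p n \<and> inj_on p {1..n}"

definition sub_len :: "('v \<Rightarrow> 'v \<Rightarrow> nat) \<Rightarrow> (nat \<Rightarrow> 'v) \<Rightarrow> nat \<Rightarrow> nat \<Rightarrow> real" where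
  "sub_len w p s t = (\<Sum>k\<in>{s..<t}. real (w (p k) (p (Suc k))))"

inductive comp_anchor :: "('v \<Rightarrow> 'v \<Rightarrow> nat) \<Rightarrow> (nat \<Rightarrow> 'v) \<Rightarrow> nat \<Rightarrow> real \<Rightarrow> real \<Rightarrow> nat \<Rightarrow> bool"
  for w p n \<beta> \<rho> where
  first: "comp_anchor w p n \<beta> \<rho> 1"
| next_anchor: "\<lbrakk> comp_anchor w p n \<beta> \<rho> c; c < x; x \<le> n; sub_len w p c x \<ge> \<beta> * \<rho>;
          \<forall>y. c < y \<and> y < x \<longrightarrow> sub_len w p c y < \<beta> * \<rho> \<rbrakk>
        \<Longrightarrow> comp_anchor w p n \<beta> \<rho> x"

definition comp_set :: "('v \<Rightarrow> 'v \<Rightarrow> nat) \<Rightarrow> (nat \<Rightarrow> 'v) \<Rightarrow> nat \<Rightarrow> real \<Rightarrow> real \<Rightarrow> nat set" where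
  "comp_set w p n \<beta> \<rho> =
     {c. comp_anchor w p n \<beta> \<rho> c} \<union> {c - 1 | c. comp_anchor w p n \<beta> \<rho> c \<and> c > 1} \<union> {n}"

definition comp_size :: "('v \<Rightarrow> 'v \<Rightarrow> nat) \<Rightarrow> (nat \<Rightarrow> 'v) \<Rightarrow> nat \<Rightarrow> real \<Rightarrow> real \<Rightarrow> nat" where
  "comp_size w p n \<beta> \<rho> = card (comp_set w p n \<beta> \<rho>)"

definition comp_pi :: "('v \<Rightarrow> 'v \<Rightarrow> nat) \<Rightarrow> (nat \<Rightarrow> 'v) \<Rightarrow> nat \<Rightarrow> real \<Rightarrow> real \<Rightarrow> nat \<Rightarrow> nat" where
  "comp_pi w p n \<beta> \<rho> i =
     (if i = 0 then 0
      else if i \<le> comp_size w p n \<beta> \<rho> then sorted_list_of_set (comp_set w p n \<beta> \<rho>) ! (i - 1)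
      else n + 1)"

definition freeM :: "('v \<Rightarrow> 'v \<Rightarrow> real) \<Rightarrow> real \<Rightarrow> real \<Rightarrow> real \<Rightarrow> (nat \<Rightarrow> 'v) \<Rightarrow> (nat \<Rightarrow> 'v) \<Rightarrow> nat \<Rightarrow> nat \<Rightarrow> int" where
  "freeM dt \<alpha> \<beta> \<rho> p q i j =
     (if dt (p i) (q j) \<le> (1 + \<alpha>) * \<rho> then -1
      else if dt (p i) (q j) > (1 + \<alpha>) * (1 + \<alpha> + \<beta>) * \<rho> then 1
      else 0)"

end

theory Submission
  imports Defs
begin

text \<open>Let \<open>c = \<pi>(i)\<close>. The only compression indices in the window \<open>(\<pi>(i-1), \<pi>(i+1))\<close> are
  \<open>c\<close> itself, and every anchor \<open>a > 1\<close> drags its predecessor \<open>a - 1\<close> into the index set.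
  Hence no anchor lies in \<open>(min x c, max x c]\<close> for \<open>x\<close> in the window, so the greedy scan
  started at the last anchor before \<open>min x c\<close> has not yet reached length \<open>\<beta>\<rho>\<close> at
  \<open>max x c\<close>: the subpath between \<open>p x\<close> and \<open>p c\<close> is shorter than \<open>\<beta>\<rho>\<close>.
  The triangle inequality then gives \<open>d(p x, q j) \<le> \<beta>\<rho> + d(p c, q j) \<le> (1 + \<alpha> + \<beta>)\<rho>\<close>,
  and the perceived distance exceeds this by at most the factor \<open>1 + \<alpha>\<close>.\<close>

lemma walk_weight_Cons2: "walk_weight w (a # b # zs) = w a b + walk_weight w (b # zs)"
  unfolding walk_weight_def by (simp del: sum.lessThan_Suc add: sum.lessThan_Suc_shift)

lemma walk_weight_singleton: "walk_weight w [a] = 0"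
  unfolding walk_weight_def by simp

lemma is_walk_singleton: "is_walk V E [a] \<longleftrightarrow> a \<in> V"
  unfolding is_walk_def by simp

lemma is_walk_Cons2: "is_walk V E (a # b # zs) \<longleftrightarrow> a \<in> V \<and> (a, b) \<in> E \<and> is_walk V E (b # zs)"
  unfolding is_walk_def by (auto simp: less_Suc_eq_0_disj)

lemma walk_append:
  assumes "is_walk V E xs" "is_walk V E ys" "last xs = hd ys"
  shows "is_walk V E (xs @ tl ys) \<and> walk_weight w (xs @ tl ys) = walk_weight w xs + walk_weight w ys"
  using assms
proof (induction xs rule: induct_list012)
  case 1 then show ?case by (simp add: is_walk_def)
next
  case (2 a)
  then have "ys = a # tl ys" by (metis is_walk_def last_ConsL list.collapse)
  then show ?case using 2 by (metis append_Cons append_Nil add_0 walk_weight_singleton)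
next
  case (3 a b zs)
  then show ?case by (simp add: is_walk_Cons2 walk_weight_Cons2)
qed

lemma walk_rev:
  assumes G: "weighted_graph V E w" and xs: "is_walk V E xs"
  shows "is_walk V E (rev xs) \<and> walk_weight w (rev xs) = walk_weight w xs"
  using xs
proof (induction xs rule: induct_list012)
  case 1 then show ?case by (simp add: is_walk_def)
next
  case (2 a) then show ?case by simp
next
  case (3 a b zs)
  then have ab: "(a, b) \<in> E" and a: "a \<in> V" and IH: "is_walk V E (rev (b # zs)) \<and>
      walk_weight w (rev (b # zs)) = walk_weight w (b # zs)"
    by (auto simp: is_walk_Cons2)
  have ba: "is_walk V E [b, a]" "w b a = w a b"
    using G ab a IH unfolding weighted_graph_def by (auto simp: is_walk_Cons2 is_walk_singleton is_walk_def)
  have "rev (a # b # zs) = rev (b # zs) @ tl [b, a]" by simp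
  then show ?case
    using walk_append[OF IH[THEN conjunct1] ba(1), of w] IH ba(2)
    by (simp add: walk_weight_Cons2 walk_weight_singleton)
qed

lemma walk_of_segment:
  assumes p: "is_walk_seq V E p n" and st: "1 \<le> s" "s \<le> t" "t \<le> n"
  shows "is_walk V E (map p [s..<Suc t]) \<and> real (walk_weight w (map p [s..<Suc t])) = sub_len w p s t"
proof
  have nth: "map p [s..<Suc t] ! k = p (s + k)" if "k \<le> t - s" for k
    using that st by (simp del: upt_Suc)
  show "is_walk V E (map p [s..<Suc t])"
    using p st unfolding is_walk_def is_walk_seq_def by (auto simp: nth simp del: upt_Suc)
  have "walk_weight w (map p [s..<Suc t]) = (\<Sum>k<t - s. w (p (k + s)) (p (Suc k + s)))"
    unfolding walk_weight_def using st by (intro sum.cong) (auto simp: nth add.commute simp del: upt_Suc)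
  also have "\<dots> = (\<Sum>k\<in>{s..<t}. w (p k) (p (Suc k)))"
    using sum.shift_bounds_nat_ivl[of "\<lambda>k. w (p k) (p (Suc k))" 0 s "t - s"] st
    by (simp add: atLeast0LessThan)
  finally show "real (walk_weight w (map p [s..<Suc t])) = sub_len w p s t"
    unfolding sub_len_def by simp
qed

lemma sp_dist_le_walk_weight:
  "is_walk V E xs \<Longrightarrow> sp_dist V E w (hd xs) (last xs) \<le> real (walk_weight w xs)"
  unfolding sp_dist_def by (rule cInf_lower) (auto intro: bdd_belowI[of _ 0])

lemma sp_dist_triangle_walk:
  assumes conn: "connected_graph V E" and xs: "is_walk V E xs" and v: "v \<in> V"
  shows "sp_dist V E w (hd xs) v \<le> real (walk_weight w xs) + sp_dist V E w (last xs) v"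
proof -
  let ?Y = "{real (walk_weight w ys) | ys. is_walk V E ys \<and> hd ys = last xs \<and> last ys = v}"
  have "last xs \<in> V" using xs unfolding is_walk_def by auto
  then obtain ys where "is_walk V E ys" "hd ys = last xs" "last ys = v"
    using conn v unfolding connected_graph_def by blast
  then have "?Y \<noteq> {}" by blast
  moreover have "sp_dist V E w (hd xs) v - real (walk_weight w xs) \<le> real (walk_weight w ys)"
    if ys: "is_walk V E ys" "hd ys = last xs" "last ys = v" for ys
  proof -
    have zs: "is_walk V E (xs @ tl ys) \<and> walk_weight w (xs @ tl ys) = walk_weight w xs + walk_weight w ys"
      using walk_append[OF xs ys(1)] ys(2) by simp
    have "xs \<noteq> []" "ys \<noteq> []" using xs ys(1) unfolding is_walk_def by auto
    then have "hd (xs @ tl ys) = hd xs" "last (xs @ tl ys) = v"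
      using ys(2,3) by (auto simp: last_append last_tl) (metis last_ConsL list.collapse)
    then show ?thesis using sp_dist_le_walk_weight[of V E "xs @ tl ys" w] zs by simp
  qed
  ultimately have "sp_dist V E w (hd xs) v - real (walk_weight w xs) \<le> Inf ?Y"
    by (intro cInf_greatest) auto
  then show ?thesis unfolding sp_dist_def by simp
qed

lemma sp_dist_le_sub_len_plus:
  assumes G: "weighted_graph V E w" and conn: "connected_graph V E" and p: "is_walk_seq V E p n"
    and st: "1 \<le> s" "s \<le> t" "t \<le> n" and v: "v \<in> V"
  shows "sp_dist V E w (p s) v \<le> sub_len w p s t + sp_dist V E w (p t) v"
    and "sp_dist V E w (p t) v \<le> sub_len w p s t + sp_dist V E w (p s) v"
proof -
  define xs where "xs = map p [s..<Suc t]"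
  have xs: "is_walk V E xs" "real (walk_weight w xs) = sub_len w p s t"
    using walk_of_segment[OF p st] unfolding xs_def by auto
  have ends: "hd xs = p s" "last xs = p t"
    using st(2) unfolding xs_def by (simp_all add: hd_map last_map del: upt_Suc)
  show "sp_dist V E w (p s) v \<le> sub_len w p s t + sp_dist V E w (p t) v"
    using sp_dist_triangle_walk[OF conn xs(1) v, of w] xs(2) ends by simp
  have "is_walk V E (rev xs)" "walk_weight w (rev xs) = walk_weight w xs"
    using walk_rev[OF G xs(1)] by auto
  moreover have "hd (rev xs) = p t" "last (rev xs) = p s"
    using ends xs(1) unfolding is_walk_def by (simp_all add: hd_rev last_rev)
  ultimately show "sp_dist V E w (p t) v \<le> sub_len w p s t + sp_dist V E w (p s) v"
    using sp_dist_triangle_walk[OF conn _ v, of "rev xs" w] xs(2) by simp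
qed

lemma comp_anchor_bounds: "comp_anchor w p n \<beta> \<rho> c \<Longrightarrow> 1 \<le> n \<Longrightarrow> 1 \<le> c \<and> c \<le> n"
  by (induction rule: comp_anchor.induct) auto

lemma comp_set_subset:
  assumes "1 \<le> n" shows "comp_set w p n \<beta> \<rho> \<subseteq> {1..n}"
proof
  fix c assume "c \<in> comp_set w p n \<beta> \<rho>"
  then consider "comp_anchor w p n \<beta> \<rho> c"
    | d where "comp_anchor w p n \<beta> \<rho> d" "1 < d" "c = d - 1" | "c = n"
    unfolding comp_set_def by blast
  then show "c \<in> {1..n}"
  proof cases
    case 1
    then show ?thesis using comp_anchor_bounds[OF 1 assms] by simp
  next
    case 2
    then show ?thesis using comp_anchor_bounds[OF 2(1) assms] by auto
  qed (use assms in simp)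
qed

lemma finite_comp_set:
  assumes "1 \<le> n" shows "finite (comp_set w p n \<beta> \<rho>)"
  using comp_set_subset[OF assms] by (rule finite_subset) simp

lemma sub_len_mono_left: "s \<le> s' \<Longrightarrow> sub_len w p s' t \<le> sub_len w p s t"
  unfolding sub_len_def by (rule sum_mono2) auto

lemma sub_len_lt_before_next_anchor:
  assumes a: "comp_anchor w p n \<beta> \<rho> a" and t: "a < t" "t \<le> n"
    and no_anchor: "\<And>a'. comp_anchor w p n \<beta> \<rho> a' \<Longrightarrow> a < a' \<Longrightarrow> a' \<le> t \<Longrightarrow> False"
  shows "sub_len w p a t < \<beta> * \<rho>"
proof (rule ccontr)
  define long where "long z \<longleftrightarrow> a < z \<and> z \<le> n \<and> \<beta> * \<rho> \<le> sub_len w p a z" for z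
  define x where "x = (LEAST z. long z)"
  assume "\<not> ?thesis"
  then have "long t" using t unfolding long_def by simp
  then have x: "long x" "x \<le> t" unfolding x_def by (simp_all add: LeastI Least_le)
  have "sub_len w p a z < \<beta> * \<rho>" if "a < z" "z < x" for z
    using not_less_Least[of z long] that x(1) unfolding x_def long_def by auto
  then have "comp_anchor w p n \<beta> \<rho> x"
    using comp_anchor.next_anchor[OF a, of x] x(1) unfolding long_def by blast
  then show False using no_anchor x unfolding long_def by blast
qed

lemma sub_len_lt_if_anchor_free:
  assumes st: "1 \<le> s" "s < t" "t \<le> n"
    and no_anchor: "\<And>a. comp_anchor w p n \<beta> \<rho> a \<Longrightarrow> s < a \<Longrightarrow> a \<le> t \<Longrightarrow> False"
  shows "sub_len w p s t < \<beta> * \<rho>"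
proof -
  define A where "A = {a. comp_anchor w p n \<beta> \<rho> a \<and> a \<le> s}"
  have "finite A" by (rule finite_subset[of _ "{..s}"]) (auto simp: A_def)
  moreover have "1 \<in> A" using st(1) comp_anchor.first unfolding A_def by simp
  ultimately have a: "Max A \<in> A" and above: "\<And>a. a \<in> A \<Longrightarrow> a \<le> Max A"
    by (auto intro: Max_in)
  have "sub_len w p (Max A) t < \<beta> * \<rho>"
  proof (rule sub_len_lt_before_next_anchor)
    fix a' assume a': "comp_anchor w p n \<beta> \<rho> a'" "Max A < a'" "a' \<le> t"
    then have "a' \<notin> A" using above by (meson leD)
    then show False using no_anchor[OF a'(1) _ a'(3)] a'(1) unfolding A_def by simp
  qed (use a st in \<open>auto simp: A_def\<close>)
  moreover have "sub_len w p s t \<le> sub_len w p (Max A) t"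
    using a unfolding A_def by (auto intro: sub_len_mono_left)
  ultimately show ?thesis by simp
qed

lemma comp_pi_in_comp_set:
  assumes n: "1 \<le> n" and i: "1 \<le> i" "i \<le> comp_size w p n \<beta> \<rho>"
  shows "comp_pi w p n \<beta> \<rho> i \<in> comp_set w p n \<beta> \<rho>"
  using finite_comp_set[OF n, of w p \<beta> \<rho>] i nth_mem[of "i - 1" "sorted_list_of_set (comp_set w p n \<beta> \<rho>)"]
  unfolding comp_pi_def comp_size_def by simp

lemma comp_pi_le:
  assumes n: "1 \<le> n" shows "comp_pi w p n \<beta> \<rho> i \<le> n + 1"
proof (cases "1 \<le> i \<and> i \<le> comp_size w p n \<beta> \<rho>")
  case True
  then have "comp_pi w p n \<beta> \<rho> i \<in> comp_set w p n \<beta> \<rho>" by (intro comp_pi_in_comp_set[OF n]) auto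
  then show ?thesis using comp_set_subset[OF n, of w p \<beta> \<rho>] by auto
qed (auto simp: comp_pi_def)

lemma comp_set_outside_comp_pi_neighbours:
  assumes n: "1 \<le> n" and i: "1 \<le> i" "i \<le> comp_size w p n \<beta> \<rho>"
    and s: "s \<in> comp_set w p n \<beta> \<rho>"
  shows "comp_pi w p n \<beta> \<rho> i < s \<Longrightarrow> comp_pi w p n \<beta> \<rho> (i + 1) \<le> s"
    and "s < comp_pi w p n \<beta> \<rho> i \<Longrightarrow> s \<le> comp_pi w p n \<beta> \<rho> (i - 1)"
proof -
  define L where "L = sorted_list_of_set (comp_set w p n \<beta> \<rho>)"
  have L: "sorted L" "set L = comp_set w p n \<beta> \<rho>" "length L = comp_size w p n \<beta> \<rho>"
    using finite_comp_set[OF n, of w p \<beta> \<rho>] unfolding L_def comp_size_def by auto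
  obtain k where k: "k < length L" "L ! k = s" using s L(2) by (metis in_set_conv_nth)
  have pi: "comp_pi w p n \<beta> \<rho> j = L ! (j - 1)" if "1 \<le> j" "j \<le> length L" for j
    using that L(3) unfolding comp_pi_def L_def by simp
  show "comp_pi w p n \<beta> \<rho> (i + 1) \<le> s" if "comp_pi w p n \<beta> \<rho> i < s"
  proof -
    have "i - 1 < k"
    proof (rule ccontr)
      assume "\<not> i - 1 < k"
      then have "L ! k \<le> L ! (i - 1)" using i L(3) by (intro sorted_nth_mono[OF L(1)]) auto
      then show False using that k(2) pi[of i] i L(3) by simp
    qed
    then show ?thesis using k i pi[of "i + 1"] sorted_nth_mono[OF L(1), of i k] by simp
  qed
  show "s \<le> comp_pi w p n \<beta> \<rho> (i - 1)" if "s < comp_pi w p n \<beta> \<rho> i"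
  proof -
    have "k < i - 1"
    proof (rule ccontr)
      assume "\<not> k < i - 1"
      then have "L ! (i - 1) \<le> L ! k" using k(1) by (intro sorted_nth_mono[OF L(1)]) auto
      then show False using that k(2) pi[of i] i L(3) by simp
    qed
    then show ?thesis using k i L(3) pi[of "i - 1"] sorted_nth_mono[OF L(1), of k "i - 1 - 1"] by simp
  qed
qed

lemma sub_len_comp_pi_neighbourhood:
  assumes n: "1 \<le> n" and i: "1 \<le> i" "i \<le> comp_size w p n \<beta> \<rho>"
    and x: "comp_pi w p n \<beta> \<rho> (i - 1) < x" "x < comp_pi w p n \<beta> \<rho> (i + 1)"
  shows "comp_pi w p n \<beta> \<rho> i < x \<Longrightarrow> sub_len w p (comp_pi w p n \<beta> \<rho> i) x < \<beta> * \<rho>"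
    and "x < comp_pi w p n \<beta> \<rho> i \<Longrightarrow> sub_len w p x (comp_pi w p n \<beta> \<rho> i) < \<beta> * \<rho>"
proof -
  let ?c = "comp_pi w p n \<beta> \<rho> i"
  have c: "?c \<in> comp_set w p n \<beta> \<rho>" by (rule comp_pi_in_comp_set[OF n i])
  then have c_bounds: "1 \<le> ?c" "?c \<le> n" using comp_set_subset[OF n, of w p \<beta> \<rho>] by auto
  have x_le: "x \<le> n" using x(2) comp_pi_le[OF n, of w p \<beta> \<rho> "i + 1"] by simp
  have anchor_in: "a \<in> comp_set w p n \<beta> \<rho>" "1 < a \<Longrightarrow> a - 1 \<in> comp_set w p n \<beta> \<rho>"
    if "comp_anchor w p n \<beta> \<rho> a" for a
    using that unfolding comp_set_def by auto
  show "sub_len w p ?c x < \<beta> * \<rho>" if "?c < x"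
  proof (rule sub_len_lt_if_anchor_free[OF c_bounds(1) that x_le])
    fix a assume "comp_anchor w p n \<beta> \<rho> a" "?c < a" "a \<le> x"
    then show False
      using comp_set_outside_comp_pi_neighbours(1)[OF n i anchor_in(1)] x(2) by fastforce
  qed
  show "sub_len w p x ?c < \<beta> * \<rho>" if "x < ?c"
  proof (rule sub_len_lt_if_anchor_free[OF _ that c_bounds(2)])
    show "1 \<le> x" using x(1) by simp
    fix a assume "comp_anchor w p n \<beta> \<rho> a" "x < a" "a \<le> ?c"
    then show False
      using comp_set_outside_comp_pi_neighbours(2)[OF n i anchor_in(2)] x(1) by fastforce
  qed
qed

lemma sp_dist_comp_pi_neighbourhood:
  assumes G: "weighted_graph V E w" and conn: "connected_graph V E" and p: "is_walk_seq V E p n"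
    and n: "1 \<le> n" and i: "1 \<le> i" "i \<le> comp_size w p n \<beta> \<rho>"
    and x: "comp_pi w p n \<beta> \<rho> (i - 1) < x" "x < comp_pi w p n \<beta> \<rho> (i + 1)"
    and v: "v \<in> V" and \<beta>\<rho>: "0 \<le> \<beta> * \<rho>"
  shows "sp_dist V E w (p x) v \<le> \<beta> * \<rho> + sp_dist V E w (p (comp_pi w p n \<beta> \<rho> i)) v"
proof -
  let ?c = "comp_pi w p n \<beta> \<rho> i"
  have "?c \<in> comp_set w p n \<beta> \<rho>" by (rule comp_pi_in_comp_set[OF n i])
  then have c: "1 \<le> ?c" "?c \<le> n" using comp_set_subset[OF n, of w p \<beta> \<rho>] by auto
  have x_bounds: "1 \<le> x" "x \<le> n" using x comp_pi_le[OF n, of w p \<beta> \<rho> "i + 1"] by auto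
  note near = sub_len_comp_pi_neighbourhood[OF n i x]
  show ?thesis
  proof (cases x ?c rule: linorder_cases)
    case less
    have "sp_dist V E w (p x) v \<le> sub_len w p x ?c + sp_dist V E w (p ?c) v"
      using sp_dist_le_sub_len_plus(1)[OF G conn p x_bounds(1) _ c(2) v] less by simp
    then show ?thesis using near(2)[OF less] by linarith
  next
    case equal
    then show ?thesis using \<beta>\<rho> by simp
  next
    case greater
    have "sp_dist V E w (p x) v \<le> sub_len w p ?c x + sp_dist V E w (p ?c) v"
      using sp_dist_le_sub_len_plus(2)[OF G conn p c(1) _ x_bounds(2) v] greater by simp
    then show ?thesis using near(1)[OF greater] by linarith
  qed
qed

theorem mainTheorem6:
  fixes V :: "'v set" and E :: "('v \<times> 'v) set" and w :: "'v \<Rightarrow> 'v \<Rightarrow> nat"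
    and dt :: "'v \<Rightarrow> 'v \<Rightarrow> real"
    and p q :: "nat \<Rightarrow> 'v" and n m :: nat and \<rho> \<alpha> \<beta> :: real
  assumes G: "weighted_graph V E w" and conn: "connected_graph V E"
    and dt_lo: "\<And>u v. u \<in> V \<Longrightarrow> v \<in> V \<Longrightarrow> sp_dist V E w u v \<le> dt u v"
    and dt_hi: "\<And>u v. u \<in> V \<Longrightarrow> v \<in> V \<Longrightarrow> dt u v \<le> (1 + \<alpha>) * sp_dist V E w u v"
    and \<rho>: "\<rho> > 0" and \<alpha>: "\<alpha> > 0" and \<beta>: "\<beta> > 0"
    and P: "is_path_seq V E p n" and n1: "n \<ge> 1"
    and Q: "is_walk_seq V E q m"
    and i: "i \<in> {1..comp_size w p n \<beta> \<rho>}" and j: "j \<in> {1..m}"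
    and M: "freeM dt \<alpha> \<beta> \<rho> p q (comp_pi w p n \<beta> \<rho> i) j = -1"
  shows "\<forall>x::nat. comp_pi w p n \<beta> \<rho> (i - 1) < x \<and> x < comp_pi w p n \<beta> \<rho> (i + 1)
           \<longrightarrow> freeM dt \<alpha> \<beta> \<rho> p q x j \<noteq> 1"
proof (intro allI impI)
  fix x assume x: "comp_pi w p n \<beta> \<rho> (i - 1) < x \<and> x < comp_pi w p n \<beta> \<rho> (i + 1)"
  let ?c = "comp_pi w p n \<beta> \<rho> i"
  have p: "is_walk_seq V E p n" using P unfolding is_path_seq_def by simp
  have i': "1 \<le> i" "i \<le> comp_size w p n \<beta> \<rho>" using i by auto
  have "?c \<in> {1..n}" using comp_pi_in_comp_set[OF n1 i'] comp_set_subset[OF n1] by blast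
  moreover have "x \<in> {1..n}" using x comp_pi_le[OF n1, of w p \<beta> \<rho> "i + 1"] by auto
  ultimately have V: "p ?c \<in> V" "p x \<in> V" "q j \<in> V" using p Q j unfolding is_walk_seq_def by auto
  have "dt (p ?c) (q j) \<le> (1 + \<alpha>) * \<rho>" using M unfolding freeM_def by (auto split: if_splits)
  moreover have "sp_dist V E w (p x) (q j) \<le> \<beta> * \<rho> + sp_dist V E w (p ?c) (q j)"
    using x \<beta> \<rho> by (intro sp_dist_comp_pi_neighbourhood[OF G conn p n1 i' _ _ V(3)]) auto
  ultimately have "sp_dist V E w (p x) (q j) \<le> (1 + \<alpha> + \<beta>) * \<rho>"
    using dt_lo[OF V(1,3)] by (simp add: algebra_simps)
  then have "(1 + \<alpha>) * sp_dist V E w (p x) (q j) \<le> (1 + \<alpha>) * ((1 + \<alpha> + \<beta>) * \<rho>)"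
    using \<alpha> by (intro mult_left_mono) auto
  then have "dt (p x) (q j) \<le> (1 + \<alpha>) * (1 + \<alpha> + \<beta>) * \<rho>"
    using dt_hi[OF V(2,3)] by (simp add: mult.assoc)
  then show "freeM dt \<alpha> \<beta> \<rho> p q x j \<noteq> 1" unfolding freeM_def by auto
qed

end
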